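(* Consider Method 3.1 (described in the context) and suppose it does not terminate. Then for every limit point $(\bar y,\bar\gamma)$ of the generated sequence $\{(y_i,\gamma_i)\}_{i\in K}$ one has $\bar y\in X^*$.
   Context: Setting: $f,F$ convex on $\mathbb{R}^n$; $D=\{x:F(x)\le0\}$ has nonempty interior; $f$ attains its minimum $f^*$ on $D$; $X^*=\{x\in D:f(x)=f^*\}$, $x^*\in X^*$ fixed; $K=\{0,1,\dots\}$; $\operatorname{epi}(f,\mathbb{R}^n)=\{(x,\gamma):\gamma\ge f(x)\}$; $W'(z,Q)=\{b\in\mathbb{R}^{n+1}:\|b\|=1,\ \langle b,u-z\rangle\le0\ \forall u\in Q\}$ for $Q\subset\mathbb{R}^{n+1}$, and $W''(t,L)=\{a\in\mathbb{R}^n:\|a\|=1,\ \langle a,y-t\rangle\le0\ \forall y\in L\}$ for $L\subset\mathbb{R}^n$. Method 3.1: choose a closed convex bounded $G_0\subset\mathbb{R}^n$ with $x^*\in G_0$ and a closed convex $M_0\subset\mathbb{R}^{n+1}$ with $\operatorname{epi}(f,\mathbb{R}^n)\subset M_0$; points $v'\in\operatorname{int}\operatorname{epi}(f,\mathbb{R}^n)$, $v''\in\operatorname{int}D$; a number $\alpha\le\min\{f(x):x\in G_0\}$; constants $q',q''\ge1$; $i=0$. Step 1: $u_i=(y_i,\gamma_i)$ solves $\min\{\gamma:(x,\gamma)\in M_i,\ x\in G_i,\ \gamma\ge\alpha\}$; if $y_i\in D$ and $f(y_i)=\gamma_i$ stop. Step 2: choose $z_i'$ in the open segment $(v',u_i)$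 with $z_i'\notin\operatorname{int}\operatorname{epi}(f,\mathbb{R}^n)$ and $u_i+q_i'(z_i'-u_i)\in\operatorname{epi}(f,\mathbb{R}^n)$ for some $q_i'\in[1,q']$. Step 3: choose nonempty finite $B_i\subset W'(z_i',\operatorname{epi}(f,\mathbb{R}^n))$; $M_{i+1}=M_i\cap\{u:\langle b,u-z_i'\rangle\le0\ \forall b\in B_i\}$. Step 4: if $y_i\in D$, set $G_{i+1}=G_i$ and go to Step 6; otherwise choose $z_i''\in(v'',y_i)$ with $z_i''\notin\operatorname{int}D$ and $y_i+q_i''(z_i''-y_i)\in D$ for some $q_i''\in[1,q'']$. Step 5: choose nonempty finite $A_i\subset W''(z_i'',D)$; $G_{i+1}=G_i\cap\{x:\langle a,x-z_i''\rangle\le0\ \forall a\in A_i\}$. Step 6: $i\leftarrow i+1$; go to Step 1. *)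

theory Defs
  imports "HOL-Analysis.Analysis"
begin

definition epi :: "('a \<Rightarrow> real) \<Rightarrow> ('a \<times> real) set" where
  "epi f = {(x, g). g \<ge> f x}"

definition Wset :: "'b::real_inner \<Rightarrow> 'b set \<Rightarrow> 'b set" where
  "Wset z Q = {b. norm b = 1 \<and> (\<forall>u\<in>Q. inner b (u - z) \<le> 0)}"

end

theory Submission
  imports Defs
begin

(*
  Let S be the epigraph of f (resp. D), v the chosen interior point with cball v e in S, and
  u k the convergent subsequence of iterates. If u k is not in S, the cut through the point
  z k of the segment [u k, v] keeps cball v e on one side and all later iterates, in
  particular u (k + 1), on the other. This forces
  e |u k - z k| <= |u k - v| |u k - u (k + 1)|, and since a point of S lies at distance at
  most q |u k - z k| from u k, the distance from u k to S tends to 0; so the limit point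
  lies in S. Thus ybar is in D and f ybar <= gbar, while gbar <= f xstar because
  (xstar, f xstar) is never cut off and every gam i is a minimum over a set containing it.
*)

lemma closed_epi:
  fixes f :: "'a::topological_space \<Rightarrow> real"
  assumes "continuous_on UNIV f"
  shows "closed (epi f)"
proof -
  have "epi f = {p. f (fst p) \<le> snd p}" by (auto simp: epi_def)
  then show ?thesis
    using assms by (auto intro!: closed_Collect_le continuous_on_compose2[of UNIV f] continuous_intros)
qed

lemma cut_point_dist_le:
  fixes u v w z a :: "'b::real_inner"
  assumes e: "0 < e" "cball v e \<subseteq> S"
    and z: "z \<in> open_segment v u" and a: "a \<in> Wset z S" and w: "inner a (w - z) \<le> 0"
  shows "e * dist u z \<le> dist u v * dist u w"
proof -
  obtain s where s: "0 < s" "s < 1" and z_eq: "z = (1 - s) *\<^sub>R v + s *\<^sub>R u"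
    using z by (auto simp: in_segment)
  define t where "t = 1 - s"
  define c where "c = inner a (v - u)"
  have t: "0 < t" "t < 1" using s by (auto simp: t_def)
  have zu: "z - u = t *\<^sub>R (v - u)" by (simp add: z_eq t_def algebra_simps)
  have a1: "norm a = 1" and supp: "\<forall>x\<in>S. inner a (x - z) \<le> 0" using a by (auto simp: Wset_def)
  have "v + e *\<^sub>R a \<in> S" using e a1 by (auto simp: dist_norm)
  with supp have "inner a (v + e *\<^sub>R a - z) \<le> 0" by blast
  moreover have "v + e *\<^sub>R a - z = (1 - t) *\<^sub>R (v - u) + e *\<^sub>R a"
    using zu by (simp add: algebra_simps)
  moreover have "inner a a = 1" using a1 by (simp add: dot_square_norm)
  \<comment> \<open>the supporting halfspace at z contains v + e a, so a points away from v by at least e\<close>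
  ultimately have c_bound: "(1 - t) * c + e \<le> 0" by (simp add: c_def inner_add_right)
  then have "(1 - t) * c < 0" using e by linarith
  then have "c < 0" using t by (simp add: mult_less_0_iff)
  then have "t * c < 0" using t by (simp add: mult_pos_neg)
  then have c_le: "c \<le> - e" using c_bound by (simp add: left_diff_distrib)
  have wu: "w - u = (w - z) + t *\<^sub>R (v - u)" using zu by (simp add: algebra_simps)
  have "inner a (w - u) = inner a (w - z) + t * c" unfolding wu c_def by (simp add: inner_add_right)
  then have "inner a (w - u) \<le> t * c" using w by simp
  also have "\<dots> \<le> - (t * e)" using mult_left_mono[OF c_le, of t] t by simp
  finally have "t * e \<le> inner a (u - w)" by (simp add: inner_diff_right)
  also have "\<dots> \<le> dist u w"
    using norm_cauchy_schwarz[of a "u - w"] a1 by (simp add: dist_norm)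
  finally have "t * e * dist u v \<le> dist u w * dist u v" by (simp add: mult_right_mono)
  moreover have "dist u z = t * dist u v"
  proof -
    have "dist u z = norm (z - u)" by (simp add: dist_norm norm_minus_commute)
    then show ?thesis using t by (simp add: zu dist_norm norm_minus_commute)
  qed
  ultimately show ?thesis by (simp add: algebra_simps)
qed

lemma limit_in_closed_if_cut_points:
  fixes u :: "nat \<Rightarrow> 'b::real_inner"
  assumes S: "closed S" "v \<in> interior S" and q: "0 \<le> q" and lim: "u \<longlonglongrightarrow> ubar"
    and cut: "\<And>k. u k \<notin> S \<Longrightarrow> \<exists>z a c. z \<in> open_segment v (u k) \<and> a \<in> Wset z S
        \<and> inner a (u (Suc k) - z) \<le> 0 \<and> 0 \<le> c \<and> c \<le> q \<and> u k + c *\<^sub>R (z - u k) \<in> S"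
  shows "ubar \<in> S"
proof -
  obtain e where e: "0 < e" "cball v e \<subseteq> S" using S(2) mem_interior_cball by blast
  have bound: "infdist (u k) S \<le> q * dist (u k) v * dist (u k) (u (Suc k)) / e" for k
  proof (cases "u k \<in> S")
    case True
    then show ?thesis using e q by simp
  next
    case False
    then obtain z a c where z: "z \<in> open_segment v (u k)" and a: "a \<in> Wset z S"
      and w: "inner a (u (Suc k) - z) \<le> 0" and c: "0 \<le> c" "c \<le> q"
      and p: "u k + c *\<^sub>R (z - u k) \<in> S"
      using cut by blast
    have "infdist (u k) S \<le> dist (u k) (u k + c *\<^sub>R (z - u k))" using p by (rule infdist_le)
    also have "\<dots> = c * dist (u k) z" using c by (simp add: dist_norm norm_minus_commute)
    also have "\<dots> \<le> q * dist (u k) z" using c by (simp add: mult_right_mono)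
    also have "\<dots> \<le> q * (dist (u k) v * dist (u k) (u (Suc k)) / e)"
      using cut_point_dist_le[OF e z a w] e q
      by (intro mult_left_mono) (simp_all add: pos_le_divide_eq mult.commute)
    finally show ?thesis by simp
  qed
  have "(\<lambda>k. q * dist (u k) v * dist (u k) (u (Suc k)) / e) \<longlonglongrightarrow> q * dist ubar v * dist ubar ubar / e"
    using lim LIMSEQ_Suc[OF lim] e by (intro tendsto_intros) auto
  then have "(\<lambda>k. q * dist (u k) v * dist (u k) (u (Suc k)) / e) \<longlonglongrightarrow> 0" by simp
  moreover have "(\<lambda>k. infdist (u k) S) \<longlonglongrightarrow> infdist ubar S" using lim by (intro tendsto_intros)
  ultimately have "infdist ubar S \<le> 0"
    using bound by (intro tendsto_le[OF trivial_limit_sequentially]) auto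
  then have "infdist ubar S = 0" using infdist_nonneg[of ubar S] by linarith
  moreover have "S \<noteq> {}" using S(2) interior_subset by blast
  ultimately show ?thesis using in_closed_iff_infdist_zero[OF S(1)] by blast
qed

lemma cutting_plane_limit_point_in_set:
  fixes x :: "nat \<Rightarrow> 'b::real_inner"
  assumes S: "closed S" "v \<in> interior S" and q: "0 \<le> q"
    and C_dec: "\<And>i. C (Suc i) \<subseteq> C i" and x_in: "\<And>i. x i \<in> C i"
    and cut: "\<And>i. x i \<notin> S \<Longrightarrow> z i \<in> open_segment v (x i) \<and> 0 \<le> c i \<and> c i \<le> q
        \<and> x i + c i *\<^sub>R (z i - x i) \<in> S \<and> N i \<noteq> {} \<and> N i \<subseteq> Wset (z i) S
        \<and> C (Suc i) \<subseteq> {u. \<forall>a\<in>N i. inner a (u - z i) \<le> 0}"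
    and r: "strict_mono r" and lim: "(\<lambda>k. x (r k)) \<longlonglongrightarrow> xbar"
  shows "xbar \<in> S"
proof (rule limit_in_closed_if_cut_points[OF S q lim])
  fix k
  assume out: "x (r k) \<notin> S"
  have "Suc (r k) \<le> r (Suc k)" using r by (simp add: strict_mono_def Suc_leI)
  then have "x (r (Suc k)) \<in> C (Suc (r k))"
    using x_in lift_Suc_antimono_le[of C, OF C_dec] by blast
  moreover obtain a where "a \<in> N (r k)" using cut[OF out] by blast
  ultimately show "\<exists>z a c. z \<in> open_segment v (x (r k)) \<and> a \<in> Wset z S
      \<and> inner a (x (r (Suc k)) - z) \<le> 0 \<and> 0 \<le> c \<and> c \<le> q \<and> x (r k) + c *\<^sub>R (z - x (r k)) \<in> S"
    using cut[OF out] by blast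
qed

theorem theorem3p1p2:
  fixes f F :: "'a::euclidean_space \<Rightarrow> real"
    and xstar :: 'a
    and G :: "nat \<Rightarrow> 'a set" and M :: "nat \<Rightarrow> ('a \<times> real) set"
    and v1 :: "'a \<times> real" and v2 :: 'a and alpha q1 q2 :: real
    and y :: "nat \<Rightarrow> 'a" and gam :: "nat \<Rightarrow> real"
    and z1 :: "nat \<Rightarrow> 'a \<times> real" and qq1 :: "nat \<Rightarrow> real"
    and B :: "nat \<Rightarrow> ('a \<times> real) set"
    and z2 :: "nat \<Rightarrow> 'a" and qq2 :: "nat \<Rightarrow> real"
    and A :: "nat \<Rightarrow> 'a set"
    and ybar :: 'a and gbar :: real
  defines "D \<equiv> {x. F x \<le> 0}"
  assumes f_convex: "convex_on UNIV f"
    and F_convex: "convex_on UNIV F"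
    and D_int: "interior D \<noteq> {}"
    and xstar_D: "xstar \<in> D"
    and xstar_min: "\<forall>x\<in>D. f xstar \<le> f x"
    \<comment> \<open>initialisation\<close>
    and G0: "closed (G 0)" "convex (G 0)" "bounded (G 0)" "xstar \<in> G 0"
    and M0: "closed (M 0)" "convex (M 0)" "epi f \<subseteq> M 0"
    and v1_int: "v1 \<in> interior (epi f)"
    and v2_int: "v2 \<in> interior D"
    and alpha_le: "\<forall>x\<in>G 0. alpha \<le> f x"
    and q1_ge: "q1 \<ge> 1" and q2_ge: "q2 \<ge> 1"
    \<comment> \<open>Step 1: (y i, gam i) solves the auxiliary problem\<close>
    and step1_feas: "\<And>i. (y i, gam i) \<in> M i \<and> y i \<in> G i \<and> gam i \<ge> alpha"
    and step1_opt: "\<And>i x g. (x, g) \<in> M i \<Longrightarrow> x \<in> G i \<Longrightarrow> g \<ge> alpha \<Longrightarrow> gam i \<le> g"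
    \<comment> \<open>the method does not terminate\<close>
    and no_stop: "\<And>i. \<not> (y i \<in> D \<and> f (y i) = gam i)"
    \<comment> \<open>Step 2\<close>
    and step2: "\<And>i. z1 i \<in> open_segment v1 (y i, gam i) \<and> z1 i \<notin> interior (epi f)
                 \<and> 1 \<le> qq1 i \<and> qq1 i \<le> q1
                 \<and> (y i, gam i) + qq1 i *\<^sub>R (z1 i - (y i, gam i)) \<in> epi f"
    \<comment> \<open>Step 3\<close>
    and step3: "\<And>i. finite (B i) \<and> B i \<noteq> {} \<and> B i \<subseteq> Wset (z1 i) (epi f)
                 \<and> M (Suc i) = M i \<inter> {u. \<forall>b\<in>B i. inner b (u - z1 i) \<le> 0}"
    \<comment> \<open>Step 4, case y i in D\<close>
    and step4_in: "\<And>i. y i \<in> D \<Longrightarrow> G (Suc i) = G i"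
    \<comment> \<open>Steps 4 and 5, case y i not in D\<close>
    and step45_out: "\<And>i. y i \<notin> D \<Longrightarrow>
                 z2 i \<in> open_segment v2 (y i) \<and> z2 i \<notin> interior D
                 \<and> 1 \<le> qq2 i \<and> qq2 i \<le> q2
                 \<and> y i + qq2 i *\<^sub>R (z2 i - y i) \<in> D
                 \<and> finite (A i) \<and> A i \<noteq> {} \<and> A i \<subseteq> Wset (z2 i) D
                 \<and> G (Suc i) = G i \<inter> {x. \<forall>a\<in>A i. inner a (x - z2 i) \<le> 0}"
    \<comment> \<open>(ybar, gbar) is a limit point of the sequence\<close>
    and limpt: "\<exists>r. strict_mono r \<and> ((\<lambda>k. (y (r k), gam (r k))) \<longlongrightarrow> (ybar, gbar)) sequentially"
  shows "ybar \<in> {x\<in>D. f x = f xstar}"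
proof -
  obtain r where r: "strict_mono r" and lim: "(\<lambda>k. (y (r k), gam (r k))) \<longlonglongrightarrow> (ybar, gbar)"
    using limpt by blast
  have f_cont: "continuous_on UNIV f" and F_cont: "continuous_on UNIV F"
    using f_convex F_convex by (auto intro: convex_on_continuous)
  have xstar_kept: "xstar \<in> G i \<and> (xstar, f xstar) \<in> M i" for i
  proof (induction i)
    case (Suc i)
    have "xstar \<in> G (Suc i)"
      using Suc step4_in[of i] step45_out[of i] xstar_D by (cases "y i \<in> D") (auto simp: Wset_def)
    moreover have "(xstar, f xstar) \<in> M (Suc i)"
      using Suc step3[of i] by (auto simp: Wset_def epi_def)
    ultimately show ?case ..
  qed (use G0 M0 in \<open>auto simp: epi_def\<close>)
  then have "gam i \<le> f xstar" for i
    using step1_opt alpha_le G0(4) by blast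
  then have gbar_le: "gbar \<le> f xstar"
    using tendsto_snd[OF lim] by (intro LIMSEQ_le_const2) auto
  have "(ybar, gbar) \<in> epi f"
  proof (rule cutting_plane_limit_point_in_set[where C = M and x = "\<lambda>i. (y i, gam i)"
        and z = z1 and c = qq1 and N = B and q = q1, OF closed_epi[OF f_cont] v1_int _ _ _ _ r lim])
    show "M (Suc i) \<subseteq> M i" "(y i, gam i) \<in> M i" for i
      using step1_feas step3[of i] by auto
    show "0 \<le> q1" using q1_ge by simp
  qed (use step2 step3 in \<open>fastforce simp: order_trans[OF zero_le_one]\<close>)
  moreover have "ybar \<in> D"
  proof (rule cutting_plane_limit_point_in_set[where C = G and x = y
        and z = z2 and c = qq2 and N = A and q = q2, OF _ v2_int _ _ _ _ r tendsto_fst[OF lim, simplified]])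
    show "closed D" unfolding D_def by (intro closed_Collect_le F_cont continuous_on_const)
    show "G (Suc i) \<subseteq> G i" for i
      using step4_in[of i] step45_out[of i] by (cases "y i \<in> D") auto
    show "0 \<le> q2" using q2_ge by simp
  qed (use step1_feas in \<open>auto dest!: step45_out intro: order_trans[OF zero_le_one]\<close>)
  ultimately show ?thesis using xstar_min gbar_le by (force simp: epi_def)
qed

end
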